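(* Let $\theta=0.038526551295994$ and $\Delta=0.319418991002646$, and let $M=100$. Let $\beta_2=\frac{2-6\Delta}{1-2\Delta}$, $\beta_i=2\theta(i+1)$ for $3\le i\le 11$, and $\beta_i=1$ for $12\le i\le 100$. The online algorithm described in the context with these parameters has asymptotic competitive ratio at most $1.44465$ for online Ordered Open End Bin Packing restricted to inputs without $1$-items (all item sizes strictly below $1$).
   Context: Online Ordered Open End Bin Packing: items with sizes in $(0,1)$ (no item of size $1$) arrive one by one; each is irrevocably assigned upon arrival to a bin whose current total size is strictly below $1$ (possibly a new bin). Cost = number of bins. $\mathrm{OPT}(I)$ is the minimum number of bins of an offline packing of the sequence $I$ obeying the same order-based rule. The asymptotic competitive ratio of $\mathrm{ALG}$ is $\limsup_{k\to\infty}\sup\{\mathrm{ALG}(I)/\mathrm{OPT}(I):\mathrm{OPT}(I)\ge k\}$. The algorithm (with $M=100$ and parameters $\beta_2,\dots,\beta_M\in[0,1]$): for $1\le i\le M-1$, class $i$ consists of items of sizes in $[\frac1{i+1},\frac1i)$; class $M$ consists of items of sizes in $(0,\frac1M)$. Bins of classes $i\ge2$ are large or small and active or inactive; inactive small bins are ready (have not received a class-$1$ item) or used. For $2\le i\le M-1$ a large bin is planned to contain $i+1$ items of class $i$ and a small bin $i$ items. Actions: (a) When an item of class $1$ arrives: if a ready bin exists, pack it into one (it becomes used); otherwise, if there is a bin containing exactly one item, which is of class $1$ (opened for a class-$1$ item), pack it there; otherwise pack it into a new bin. (b) When an item of class $i$, $2\le i\le M$, arrives: if there is an active bin of class $i$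 (there is at most one), pack it there. Otherwise let $n_i$ be the current number of bins of class $i$ and $n_i^s$ the number of small ones; if $n_i^s\le\beta_i n_i$ open a new small active bin of class $i$, else a new large active bin of class $i$, and pack the item into it. Then for $i\le M-1$: if the bin has its planned number of items ($i+1$ if large, $i$ if small) it becomes inactive, and if small it becomes ready. For $i=M$: a large bin becomes inactive once its total size is at least $1$; a small bin becomes inactive (and ready) once its total size exceeds $1-\frac1M$. *)

theory Defs
  imports Complex_Main "HOL-Library.Extended_Real" "HOL-Library.Liminf_Limsup"
begin

definition M :: nat where "M = 100"

definition theta :: real where "theta = 0.038526551295994"
definition Delta :: real where "Delta = 0.319418991002646"

text \<open>The parameters beta_i of the theorem (beta_i only matters for 2 <= i <= M).\<close>
definition beta_paper :: "nat \<Rightarrow> real" where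
  "beta_paper i =
     (if i = 2 then (2 - 6 * Delta) / (1 - 2 * Delta)
      else if 3 \<le> i \<and> i \<le> 11 then 2 * theta * real (i + 1)
      else if 12 \<le> i \<and> i \<le> 100 then 1
      else 0)"

definition item_class :: "real \<Rightarrow> nat" where
  "item_class x = (if x < 1 / real M then M
     else (THE i. 1 \<le> i \<and> i \<le> M - 1 \<and> 1 / real (i + 1) \<le> x \<and> x < 1 / real i))"

text \<open>A bin records its class (1 for bins opened for a class-1 item), whether it is
  small (else large), active, used (a small bin that received a class-1 item),
  and its contents in packing order.\<close>
record bin =
  bcls :: nat
  bsmall :: bool
  bactive :: bool
  bused :: bool
  bitems :: "real list"

definition ready :: "bin \<Rightarrow> bool" where
  "ready b \<longleftrightarrow> 2 \<le> bcls b \<and> bsmall b \<and> \<not> bactive b \<and> \<not> bused b"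

definition full :: "bin \<Rightarrow> bool" where
  "full b \<longleftrightarrow>
     (if bcls b \<le> M - 1 then
        length (bitems b) = (if bsmall b then bcls b else bcls b + 1)
      else if bsmall b then sum_list (bitems b) > 1 - 1 / real M
      else sum_list (bitems b) \<ge> 1)"

definition close_bin :: "bin \<Rightarrow> bin" where
  "close_bin b = b\<lparr>bactive := bactive b \<and> \<not> full b\<rparr>"

definition add_item :: "real \<Rightarrow> bin \<Rightarrow> bin" where
  "add_item x b = b\<lparr>bitems := bitems b @ [x]\<rparr>"

text \<open>One step of the algorithm (nondeterministic where the description leaves a
  choice, e.g. which ready bin receives a class-1 item).\<close>
inductive alg_step :: "(nat \<Rightarrow> real) \<Rightarrow> bin list \<Rightarrow> real \<Rightarrow> bin list \<Rightarrow> bool"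
  for beta :: "nat \<Rightarrow> real" where
  class1_ready:
    "\<lbrakk> item_class x = 1; j < length B; ready (B ! j) \<rbrakk> \<Longrightarrow>
     alg_step beta B x (B[j := (add_item x (B ! j))\<lparr>bused := True\<rparr>])"
| class1_pair:
    "\<lbrakk> item_class x = 1; \<not> (\<exists>b\<in>set B. ready b); j < length B;
       bcls (B ! j) = 1; length (bitems (B ! j)) = 1 \<rbrakk> \<Longrightarrow>
     alg_step beta B x (B[j := add_item x (B ! j)])"
| class1_new:
    "\<lbrakk> item_class x = 1; \<not> (\<exists>b\<in>set B. ready b);
       \<not> (\<exists>b\<in>set B. bcls b = 1 \<and> length (bitems b) = 1) \<rbrakk> \<Longrightarrow>
     alg_step beta B x (B @ [\<lparr>bcls = 1, bsmall = False, bactive = False, bused = False,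
                              bitems = [x]\<rparr>])"
| classi_active:
    "\<lbrakk> item_class x = i; 2 \<le> i; j < length B; bcls (B ! j) = i; bactive (B ! j) \<rbrakk> \<Longrightarrow>
     alg_step beta B x (B[j := close_bin (add_item x (B ! j))])"
| classi_new:
    "\<lbrakk> item_class x = i; 2 \<le> i; \<not> (\<exists>b\<in>set B. bcls b = i \<and> bactive b) \<rbrakk> \<Longrightarrow>
     alg_step beta B x
       (B @ [close_bin \<lparr>bcls = i,
                 bsmall = (real (length (filter (\<lambda>b. bcls b = i \<and> bsmall b) B))
                           \<le> beta i * real (length (filter (\<lambda>b. bcls b = i) B))),
                 bactive = True, bused = False, bitems = [x]\<rparr>])"

inductive alg_run :: "(nat \<Rightarrow> real) \<Rightarrow> real list \<Rightarrow> bin list \<Rightarrow> bool"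
  for beta :: "nat \<Rightarrow> real" where
  run_nil: "alg_run beta [] []"
| run_snoc: "\<lbrakk> alg_run beta I B; alg_step beta B x B' \<rbrakk> \<Longrightarrow> alg_run beta (I @ [x]) B'"

definition valid_input :: "real list \<Rightarrow> bool" where
  "valid_input I \<longleftrightarrow> (\<forall>x\<in>set I. 0 < x \<and> x < 1)"

text \<open>An assignment f of item indices to bin labels is a valid ordered open-end
  packing if each item goes into a bin whose current load (items before it) is below 1.\<close>
definition valid_packing :: "real list \<Rightarrow> (nat \<Rightarrow> nat) \<Rightarrow> bool" where
  "valid_packing I f \<longleftrightarrow>
     (\<forall>j < length I. (\<Sum>k \<in> {k. k < j \<and> f k = f j}. I ! k) < 1)"

definition OPT :: "real list \<Rightarrow> nat" where
  "OPT I = (LEAST m. \<exists>f. valid_packing I f \<and> card (f ` {..<length I}) = m)"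

definition asymp_ratio :: "(nat \<Rightarrow> real) \<Rightarrow> ereal" where
  "asymp_ratio beta =
     limsup (\<lambda>k. SUP (I, B) \<in> {(I, B). valid_input I \<and> alg_run beta I B \<and> OPT I \<ge> k}.
                   ereal (real (length B) / real (OPT I)))"

end

(*
  Every item gets an early and a late weight depending on its class.
  Let t be the last arrival of a class-1 item that finds no ready bin: before t each
  class-1 bin is paired with at most one further class-1 item, and each small bin opened
  so far will absorb a later class-1 item; from t on, class-1 items cost nothing. Counting
  bins class by class with the invariants of the algorithm, the cost is at most the early
  weights of the items before t plus the late weights of the items from t on, up to an
  additive constant.

  Conversely, every bin of an offline packing carries mixed weight at most 1.44465. The
  items of a bin other than its last one have total size below 1. If the last item arrives
  before t, a knapsack bound on the early weights gives the claim; otherwise every weight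
  is at most 3 (1 - 2 Delta) times the size, and 4 (1 - 2 Delta) <= 1.44465.
*)
theory Submission
  imports Defs "HOL-Library.Multiset"
begin


lemma item_class_eqI:
  assumes "1 \<le> i" "i \<le> 99" "1 / real (i + 1) \<le> x" "x < 1 / real i"
  shows "item_class x = i"
proof -
  have "0 < x" using assms(3) by (rule less_le_trans[rotated]) simp
  have ceiling_char: "\<lceil>1 / x\<rceil> = int j + 1" if "1 \<le> j" "1 / real (j + 1) \<le> x" "x < 1 / real j" for j
    using that \<open>0 < x\<close> by (simp add: ceiling_eq_iff field_simps)
  have unique: "j = i" if "1 \<le> j" "1 / real (j + 1) \<le> x" "x < 1 / real j" for j
    using ceiling_char[OF that] ceiling_char[OF assms(1,3,4)] by simp
  have "\<not> x < 1 / real M"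
  proof -
    have "1 / real M \<le> 1 / real (i + 1)" using assms(1,2) by (simp add: M_def field_simps)
    then show ?thesis using assms(3) by linarith
  qed
  moreover have "(THE j. 1 \<le> j \<and> j \<le> M - 1 \<and> 1 / real (j + 1) \<le> x \<and> x < 1 / real j) = i"
  proof (rule the_equality)
    show "1 \<le> i \<and> i \<le> M - 1 \<and> 1 / real (i + 1) \<le> x \<and> x < 1 / real i"
      using assms by (simp add: M_def)
  qed (use unique in blast)
  ultimately show ?thesis unfolding item_class_def by simp
qed

lemma item_class_bounds:
  assumes "0 < x" "x < 1"
  shows "1 \<le> item_class x" and "item_class x \<le> 100" and "item_class x = 100 \<longleftrightarrow> x < 1/100"
    and "item_class x \<le> 99 \<Longrightarrow> 1 / real (item_class x + 1) \<le> x \<and> x < 1 / real (item_class x)"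
proof -
  have "1 \<le> item_class x \<and> item_class x \<le> 100 \<and> (item_class x = 100 \<longleftrightarrow> x < 1/100)
    \<and> (item_class x \<le> 99 \<longrightarrow> 1 / real (item_class x + 1) \<le> x \<and> x < 1 / real (item_class x))"
  proof (cases "x < 1/100")
    case True
    then show ?thesis by (simp add: item_class_def M_def)
  next
    case False
    define i where "i = nat \<lceil>1 / x\<rceil> - 1"
    have "1 < 1 / x" "1 / x \<le> 100" using assms False by (simp_all add: field_simps)
    then have ceiling_range: "2 \<le> \<lceil>1 / x\<rceil>" "\<lceil>1 / x\<rceil> \<le> 100" by linarith+
    have "nat \<lceil>1 / x\<rceil> \<ge> 1" using ceiling_range by linarith
    then have "real i = real (nat \<lceil>1 / x\<rceil>) - 1" unfolding i_def by simp
    then have i: "real i = of_int \<lceil>1 / x\<rceil> - 1" using ceiling_range by simp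
    have "1 \<le> real i" "real i \<le> 99" using i ceiling_range by linarith+
    then have i_range: "1 \<le> i" "i \<le> 99" by simp_all
    have "real i < 1 / x" "1 / x \<le> real i + 1" using i by linarith+
    then have bounds: "1 / real (i + 1) \<le> x" "x < 1 / real i"
      using assms i_range by (simp_all add: field_simps)
    then show ?thesis using item_class_eqI[OF i_range bounds] i_range False by simp
  qed
  then show "1 \<le> item_class x" "item_class x \<le> 100" "item_class x = 100 \<longleftrightarrow> x < 1/100"
    "item_class x \<le> 99 \<Longrightarrow> 1 / real (item_class x + 1) \<le> x \<and> x < 1 / real (item_class x)"
    by auto
qed

lemma item_class_1_ge_half: "0 < x \<Longrightarrow> x < 1 \<Longrightarrow> item_class x = 1 \<Longrightarrow> 1/2 \<le> x"
  using item_class_bounds(4)[of x] by simp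

definition n_items :: "nat \<Rightarrow> real list \<Rightarrow> real" where
  "n_items i I = (\<Sum>x\<leftarrow>I. of_bool (item_class x = i))"

definition tiny_volume :: "real list \<Rightarrow> real" where
  "tiny_volume I = (\<Sum>x\<leftarrow>I. if item_class x = 100 then x else 0)"

lemma n_items_snoc [simp]: "n_items i (I @ [x]) = n_items i I + of_bool (item_class x = i)"
  by (simp add: n_items_def)

lemma tiny_volume_snoc [simp]: "tiny_volume (I @ [x]) = tiny_volume I + (if item_class x = 100 then x else 0)"
  by (simp add: tiny_volume_def)

section \<open>Bookkeeping of the bins\<close>

definition planned_size :: "bin \<Rightarrow> nat" where
  "planned_size b = (if bsmall b then bcls b else bcls b + 1)"

definition tiny_load :: "bin \<Rightarrow> real" where
  "tiny_load b = sum_list (filter (\<lambda>x. x < 1/100) (bitems b))"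

definition bin_inv :: "bin \<Rightarrow> bool" where
  "bin_inv b \<longleftrightarrow> 1 \<le> bcls b \<and> bcls b \<le> 100
    \<and> (\<forall>x\<in>set (bitems b). 0 < x \<and> x < 1)
    \<and> (bcls b = 1 \<longrightarrow> \<not> bsmall b \<and> \<not> bactive b \<and> \<not> bused b \<and> bitems b \<noteq> [])
    \<and> (bused b \<longrightarrow> 2 \<le> bcls b \<and> bsmall b \<and> \<not> bactive b)
    \<and> (2 \<le> bcls b \<and> bcls b \<le> 99 \<longrightarrow>
         (bactive b \<longrightarrow> bitems b \<noteq> [] \<and> length (bitems b) < planned_size b)
       \<and> (\<not> bactive b \<longrightarrow> length (bitems b) = planned_size b + of_bool (bused b)))
    \<and> (bcls b = 100 \<longrightarrow> (\<not> bactive b \<longrightarrow> 99/100 < tiny_load b)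
                       \<and> (\<not> bused b \<longrightarrow> (\<forall>x\<in>set (bitems b). x < 1/100)))"

definition count_bins :: "(bin \<Rightarrow> bool) \<Rightarrow> bin list \<Rightarrow> real" where
  "count_bins P B = (\<Sum>b\<leftarrow>B. of_bool (P b))"

text \<open>A used bin also holds one class-1 item.\<close>
definition class_items :: "nat \<Rightarrow> bin list \<Rightarrow> real" where
  "class_items i B = (\<Sum>b\<leftarrow>B. if bcls b = i then real (length (bitems b)) - of_bool (bused b) else 0)"

definition tiny_credit :: "bin list \<Rightarrow> real" where
  "tiny_credit B = (\<Sum>b\<leftarrow>B. if bcls b = 100 then min (tiny_load b) (99/100) else 0)"

lemma sum_list_map_update:
  fixes f :: "'a \<Rightarrow> 'b::ab_group_add"
  assumes "j < length xs"
  shows "(\<Sum>x\<leftarrow>xs[j := y]. f x) = (\<Sum>x\<leftarrow>xs. f x) - f (xs ! j) + f y"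
  using assms
proof (induction xs arbitrary: j)
  case (Cons a xs)
  then show ?case by (cases j) auto
qed simp

lemma count_bins_eq_0: "\<forall>b\<in>set B. \<not> P b \<Longrightarrow> count_bins P B = 0"
  unfolding count_bins_def by (induction B) auto

lemma count_bins_snoc: "count_bins P (B @ [b]) = count_bins P B + of_bool (P b)"
  by (simp add: count_bins_def)

lemma count_bins_eq_length_filter: "count_bins P B = real (length (filter P B))"
  unfolding count_bins_def by (induction B) auto

lemma count_bins_by_class:
  assumes "\<forall>b\<in>set B. P b \<longrightarrow> bcls b \<in> A" "finite A"
  shows "count_bins P B = (\<Sum>i\<in>A. count_bins (\<lambda>b. bcls b = i \<and> P b) B)"
  using assms(1)
proof (induction B)
  case (Cons b B)
  have "(\<Sum>i\<in>A. of_bool (bcls b = i \<and> P b) :: real) = of_bool (P b)"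
    using Cons.prems assms(2) by (auto simp: of_bool_def)
  then show ?case using Cons by (simp add: count_bins_def sum.distrib)
qed (simp add: count_bins_def)

lemma sum_list_class_weight:
  assumes "valid_input I"
  shows "(\<Sum>x\<leftarrow>I. if item_class x = 100 then c * x else h (item_class x))
    = (\<Sum>i\<in>{1..99}. h i * n_items i I) + c * tiny_volume I"
  using assms
proof (induction I)
  case (Cons x I)
  have x: "1 \<le> item_class x" "item_class x \<le> 100"
    using Cons.prems item_class_bounds[of x] by (auto simp: valid_input_def)
  have "(\<Sum>i\<in>{1..99}. h i * of_bool (item_class x = i)) = (if item_class x = 100 then 0 else h (item_class x))"
    using x by (auto simp: of_bool_def if_distrib cong: if_cong)
  then show ?case using Cons by (simp add: valid_input_def n_items_def tiny_volume_def sum.distrib algebra_simps)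
qed (simp add: n_items_def tiny_volume_def)

lemma class_items_le:
  assumes "\<forall>b\<in>set B. bin_inv b" "2 \<le> i" "i \<le> 99"
  shows "class_items i B \<le> (real i + 1) * count_bins (\<lambda>b. bcls b = i) B - count_bins (\<lambda>b. bcls b = i \<and> bsmall b) B"
proof -
  have "class_items i B \<le> (\<Sum>b\<leftarrow>B. (real i + 1) * of_bool (bcls b = i) - of_bool (bcls b = i \<and> bsmall b))"
    unfolding class_items_def
  proof (rule sum_list_mono)
    fix b assume "b \<in> set B"
    then have "bin_inv b" using assms(1) by blast
    then show "(if bcls b = i then real (length (bitems b)) - of_bool (bused b) else 0)
      \<le> (real i + 1) * of_bool (bcls b = i) - of_bool (bcls b = i \<and> bsmall b)"
      using assms(2,3) unfolding bin_inv_def planned_size_def by (cases "bactive b") auto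
  qed
  then show ?thesis by (simp add: count_bins_def sum_list_subtractf sum_list_const_mult)
qed

lemma class_items_ge:
  assumes "\<forall>b\<in>set B. bin_inv b" "2 \<le> i" "i \<le> 99"
  shows "(real i + 1) * count_bins (\<lambda>b. bcls b = i) B - count_bins (\<lambda>b. bcls b = i \<and> bsmall b) B
    - real i * count_bins (\<lambda>b. bcls b = i \<and> bactive b) B \<le> class_items i B"
proof -
  have "(\<Sum>b\<leftarrow>B. (real i + 1) * of_bool (bcls b = i) - of_bool (bcls b = i \<and> bsmall b)
      - real i * of_bool (bcls b = i \<and> bactive b)) \<le> class_items i B"
    unfolding class_items_def
  proof (rule sum_list_mono)
    fix b assume "b \<in> set B"
    then have "bin_inv b" using assms(1) by blast
    then show "(real i + 1) * of_bool (bcls b = i) - of_bool (bcls b = i \<and> bsmall b)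
      - real i * of_bool (bcls b = i \<and> bactive b)
      \<le> (if bcls b = i then real (length (bitems b)) - of_bool (bused b) else 0)"
      using assms(2,3) unfolding bin_inv_def planned_size_def
      by (cases "bactive b") (auto simp: Suc_le_eq)
  qed
  then show ?thesis by (simp add: count_bins_def sum_list_subtractf sum_list_const_mult)
qed

lemma tiny_credit_le: "tiny_credit B \<le> 99/100 * count_bins (\<lambda>b. bcls b = 100) B"
  unfolding tiny_credit_def count_bins_def sum_list_const_mult[symmetric]
  by (rule sum_list_mono) auto

lemma tiny_credit_ge:
  assumes "\<forall>b\<in>set B. bin_inv b"
  shows "99/100 * (count_bins (\<lambda>b. bcls b = 100) B - count_bins (\<lambda>b. bcls b = 100 \<and> bactive b) B)
    \<le> tiny_credit B"
proof -
  have "(\<Sum>b\<leftarrow>B. 99/100 * (of_bool (bcls b = 100) - of_bool (bcls b = 100 \<and> bactive b))) \<le> tiny_credit B"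
    unfolding tiny_credit_def
  proof (rule sum_list_mono)
    fix b assume "b \<in> set B"
    then have "bin_inv b" using assms by blast
    moreover have "0 \<le> tiny_load b" 
      using \<open>bin_inv b\<close> unfolding bin_inv_def tiny_load_def by (intro sum_list_nonneg) auto
    ultimately show "99/100 * (of_bool (bcls b = 100) - of_bool (bcls b = 100 \<and> bactive b))
      \<le> (if bcls b = 100 then min (tiny_load b) (99/100) else 0)"
      unfolding bin_inv_def by (cases "bactive b") auto
  qed
  then show ?thesis by (simp only: count_bins_def sum_list_subtractf sum_list_const_mult)
qed

lemma class1_bins_le:
  assumes bins: "\<forall>b\<in>set B. bin_inv b"
  shows "2 * count_bins (\<lambda>b. bcls b = 1) B
    \<le> class_items 1 B + count_bins (\<lambda>b. bcls b = 1 \<and> length (bitems b) = 1) B"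
proof -
  have "(\<Sum>b\<leftarrow>B. 2 * of_bool (bcls b = 1)) \<le> (\<Sum>b\<leftarrow>B.
    (if bcls b = 1 then real (length (bitems b)) - of_bool (bused b) else 0)
    + of_bool (bcls b = 1 \<and> length (bitems b) = 1))"
  proof (rule sum_list_mono)
    fix b assume "b \<in> set B"
    then have "bcls b = 1 \<Longrightarrow> 0 < length (bitems b) \<and> \<not> bused b" using bins unfolding bin_inv_def by auto
    then show "2 * of_bool (bcls b = 1) \<le> (if bcls b = 1 then real (length (bitems b)) - of_bool (bused b) else 0)
      + of_bool (bcls b = 1 \<and> length (bitems b) = 1)"
      by (cases "length (bitems b) = 1") (auto simp: less_Suc_eq_le[symmetric] Suc_lessI)
  qed
  then show ?thesis by (simp only: count_bins_def class_items_def sum_list_addf sum_list_const_mult)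
qed

lemma small_bins_le_used_active:
  assumes bins: "\<forall>b\<in>set B. bin_inv b" and no_ready: "\<not> (\<exists>b\<in>set B. ready b)"
  shows "count_bins bsmall B \<le> count_bins bused B + count_bins bactive B"
  unfolding count_bins_def sum_list_addf[symmetric]
proof (rule sum_list_mono)
  fix b assume "b \<in> set B"
  then have "bin_inv b" "\<not> ready b" using bins no_ready by auto
  then show "of_bool (bsmall b) \<le> (of_bool (bused b) + of_bool (bactive b) :: real)"
    unfolding bin_inv_def ready_def by (cases "bcls b = 1") auto
qed

section \<open>Cost of the algorithm for admissible parameters\<close>

locale admissible_beta =
  fixes beta :: "nat \<Rightarrow> real"
  assumes beta_bounds: "2 \<le> i \<Longrightarrow> i \<le> 99 \<Longrightarrow> 0 \<le> beta i \<and> beta i \<le> 1"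
    and beta_tiny: "beta 100 = 1"
begin

lemma beta_range: "2 \<le> i \<Longrightarrow> i \<le> 100 \<Longrightarrow> 0 \<le> beta i \<and> beta i \<le> 1"
  using beta_bounds beta_tiny by (cases "i = 100") auto

text \<open>A class-\<open>i\<close> bin holds \<open>i + 1 - beta i\<close> items on average, whence the late weight.
  A small bin later absorbs a class-1 item and so saves half a class-1 bin; items arriving
  while class-1 items still open new bins earn this saving, whence the factor \<open>1 - beta i / 2\<close>.
  A bin of tiny items (class 100) is closed only when their total size exceeds 99/100,
  whence the weights \<open>100/99 * x\<close> and \<open>50/99 * x\<close> of a tiny item \<open>x\<close>.\<close>
definition class_weight_late :: "nat \<Rightarrow> real" where
  "class_weight_late i = (if i = 1 then 0 else 1 / (real i + 1 - beta i))"

definition class_weight_early :: "nat \<Rightarrow> real" where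
  "class_weight_early i = (if i = 1 then 1/2 else (1 - beta i / 2) * class_weight_late i)"

definition weight_late :: "real \<Rightarrow> real" where
  "weight_late x = (if item_class x = 100 then 100/99 * x else class_weight_late (item_class x))"

definition weight_early :: "real \<Rightarrow> real" where
  "weight_early x = (if item_class x = 100 then 50/99 * x else class_weight_early (item_class x))"

lemma class_weight_early_le_late:
  assumes "2 \<le> i" "i \<le> 99"
  shows "class_weight_early i \<le> class_weight_late i"
proof -
  have "0 \<le> beta i" "beta i \<le> 1" using beta_bounds assms by auto
  moreover from this have "0 < class_weight_late i"
    using assms unfolding class_weight_late_def by simp
  ultimately show ?thesis unfolding class_weight_early_def using assms
    by (simp add: mult_le_cancel_right1)
qed

lemma sum_weight_late:
  assumes "valid_input I"
  shows "(\<Sum>x\<leftarrow>I. weight_late x) = (\<Sum>i\<in>{2..99}. class_weight_late i * n_items i I) + 100/99 * tiny_volume I"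
proof -
  have "{1..99::nat} = insert 1 {2..99}" by auto
  then show ?thesis
    using sum_list_class_weight[OF assms, of "100/99" class_weight_late]
    by (simp add: weight_late_def class_weight_late_def)
qed

lemma sum_weight_early_minus_late:
  assumes "valid_input I"
  shows "(\<Sum>x\<leftarrow>I. weight_early x) - (\<Sum>x\<leftarrow>I. weight_late x)
    = n_items 1 I / 2 - (\<Sum>i\<in>{2..99}. beta i * class_weight_late i * n_items i I) / 2 - 50/99 * tiny_volume I"
proof -
  have split: "{1..99::nat} = insert 1 {2..99}" by auto
  have "(\<Sum>x\<leftarrow>I. weight_early x) = (\<Sum>i\<in>{1..99}. class_weight_early i * n_items i I) + 50/99 * tiny_volume I"
    using sum_list_class_weight[OF assms, of "50/99" class_weight_early] by (simp add: weight_early_def)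
  also have "(\<Sum>i\<in>{1..99}. class_weight_early i * n_items i I)
    = n_items 1 I / 2 + (\<Sum>i\<in>{2..99}. class_weight_early i * n_items i I)"
    unfolding split by (simp add: class_weight_early_def)
  also have "(\<Sum>i\<in>{2..99}. class_weight_early i * n_items i I)
    = (\<Sum>i\<in>{2..99}. class_weight_late i * n_items i I - beta i * class_weight_late i * n_items i I / 2)"
    by (intro sum.cong) (auto simp: class_weight_early_def algebra_simps)
  finally show ?thesis using sum_weight_late[OF assms] by (simp add: sum_subtractf sum_divide_distrib)
qed

definition class_balance :: "nat \<Rightarrow> bin list \<Rightarrow> bool" where
  "class_balance i B \<longleftrightarrow> count_bins (\<lambda>b. bcls b = i \<and> bactive b) B \<le> 1
     \<and> beta i * (count_bins (\<lambda>b. bcls b = i) B - 1) \<le> count_bins (\<lambda>b. bcls b = i \<and> bsmall b) B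
     \<and> count_bins (\<lambda>b. bcls b = i \<and> bsmall b) B \<le> beta i * count_bins (\<lambda>b. bcls b = i) B + 1"

definition state_inv :: "real list \<Rightarrow> bin list \<Rightarrow> bool" where
  "state_inv I B \<longleftrightarrow> valid_input I \<and> (\<forall>b\<in>set B. bin_inv b)
     \<and> n_items 1 I = count_bins bused B + class_items 1 B
     \<and> count_bins (\<lambda>b. bcls b = 1 \<and> length (bitems b) = 1) B \<le> 1
     \<and> (\<forall>i\<in>{2..99}. n_items i I = class_items i B)
     \<and> (\<forall>i\<in>{2..100}. class_balance i B)
     \<and> tiny_credit B \<le> tiny_volume I"

text \<open>The witness \<open>t\<close> is the last arrival of a class-1 item that found no ready bin:
  every later class-1 item costs nothing.\<close>
definition class1_bound :: "real list \<Rightarrow> bin list \<Rightarrow> bool" where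
  "class1_bound I B \<longleftrightarrow> (\<exists>t \<le> length I.
     count_bins (\<lambda>b. bcls b = 1) B + 100/99 * tiny_credit B
       \<le> (\<Sum>x\<leftarrow>take t I. weight_early x) - (\<Sum>x\<leftarrow>take t I. weight_late x)
         + 100/99 * tiny_volume I + 150)"

lemma small_bins_lower:
  assumes inv: "state_inv I B" and i: "2 \<le> i" "i \<le> 99"
  shows "beta i * class_weight_late i * n_items i I - count_bins (\<lambda>b. bcls b = i \<and> bsmall b) B \<le> 2"
proof -
  define b where "b = beta i"
  define N where "N = count_bins (\<lambda>b. bcls b = i) B"
  define S where "S = count_bins (\<lambda>b. bcls b = i \<and> bsmall b) B"
  define n where "n = n_items i I"
  define k where "k = real i + 1"
  have b: "0 \<le> b" "b \<le> 1" using beta_bounds i unfolding b_def by auto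
  have k: "k \<ge> 3" using i unfolding k_def by simp
  have w: "class_weight_late i = 1 / (k - b)" using i unfolding class_weight_late_def k_def b_def by simp
  have "b * (N - 1) \<le> S" using inv i unfolding state_inv_def class_balance_def b_def N_def S_def by auto
  then have "k * (b * N - S) \<le> k * b" using k by (intro mult_left_mono) (auto simp: algebra_simps)
  also have "\<dots> \<le> k" using b k by (simp add: mult_left_le)
  finally have small_bins_scaled: "k * (b * N - S) \<le> k" .
  have "n \<le> k * N - S"
    using class_items_le[of B i] inv i unfolding state_inv_def n_def k_def N_def S_def by auto
  then have "b * n \<le> b * (k * N - S)" using b by (intro mult_left_mono) auto
  also have "\<dots> = k * (b * N - S) + (k - b) * S" by (simp add: algebra_simps)
  also have "\<dots> \<le> 2 * k - 2 * b + (k - b) * S"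
    using small_bins_scaled b k by linarith
  also have "\<dots> = (S + 2) * (k - b)" by (simp add: algebra_simps)
  finally have "b * n \<le> (S + 2) * (k - b)" .
  then have "b * n / (k - b) \<le> S + 2" using b k by (simp add: field_simps)
  then show ?thesis unfolding w b_def n_def S_def by simp
qed

lemma class_bins_upper:
  assumes inv: "state_inv I B" and i: "2 \<le> i" "i \<le> 99"
  shows "count_bins (\<lambda>b. bcls b = i) B \<le> class_weight_late i * n_items i I + 2"
proof -
  define b where "b = beta i"
  define N where "N = count_bins (\<lambda>b. bcls b = i) B"
  define S where "S = count_bins (\<lambda>b. bcls b = i \<and> bsmall b) B"
  define A where "A = count_bins (\<lambda>b. bcls b = i \<and> bactive b) B"
  define n where "n = n_items i I"
  define k where "k = real i + 1"
  have b: "0 \<le> b" "b \<le> 1" using beta_bounds i unfolding b_def by auto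
  have k: "k \<ge> 3" using i unfolding k_def by simp
  have w: "class_weight_late i = 1 / (k - b)" using i unfolding class_weight_late_def k_def b_def by simp
  have "k * N - S - (k - 1) * A \<le> n"
    using class_items_ge[of B i] inv i unfolding state_inv_def n_def k_def N_def S_def A_def by auto
  moreover have "A \<le> 1" "S \<le> b * N + 1" using inv i unfolding state_inv_def class_balance_def A_def b_def N_def S_def by auto
  moreover from this have "(k - 1) * A \<le> k - 1" using k by (simp add: mult_left_le)
  ultimately have "(k - b) * N - k \<le> n" by (simp add: algebra_simps)
  then have "N \<le> (n + k) / (k - b)" using b k by (simp add: field_simps)
  also have "\<dots> = n / (k - b) + k / (k - b)" by (simp add: add_divide_distrib)
  also have "k / (k - b) \<le> 2" using b k by (simp add: field_simps)
  finally show ?thesis unfolding w n_def N_def by simp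
qed

lemma used_bins_lower:
  assumes inv: "state_inv I B" and no_ready: "\<not> (\<exists>b\<in>set B. ready b)"
  shows "(\<Sum>i\<in>{2..99}. beta i * class_weight_late i * n_items i I)
    + count_bins (\<lambda>b. bcls b = 100) B \<le> count_bins bused B + 296"
proof -
  have bins: "\<forall>b\<in>set B. bin_inv b" using inv unfolding state_inv_def by simp
  note small_bins_le_used_active[OF bins no_ready]
  moreover have "count_bins bsmall B = (\<Sum>i\<in>{2..100}. count_bins (\<lambda>b. bcls b = i \<and> bsmall b) B)"
    using bins by (intro count_bins_by_class) (auto simp: bin_inv_def)
  moreover have "count_bins bactive B = (\<Sum>i\<in>{2..100}. count_bins (\<lambda>b. bcls b = i \<and> bactive b) B)"
    using bins by (intro count_bins_by_class) (auto simp: bin_inv_def)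
  moreover have "(\<Sum>i\<in>{2..100}. count_bins (\<lambda>b. bcls b = i \<and> bactive b) B) \<le> 99"
    using inv sum_bounded_above[of "{2..100}" "\<lambda>i. count_bins (\<lambda>b. bcls b = i \<and> bactive b) B" 1]
    unfolding state_inv_def class_balance_def by auto
  moreover have "(\<Sum>i\<in>{2..99}. beta i * class_weight_late i * n_items i I
      - count_bins (\<lambda>b. bcls b = i \<and> bsmall b) B) \<le> real (card {2..99::nat}) * 2"
    using small_bins_lower[OF inv] by (intro sum_bounded_above) auto
  moreover have "count_bins (\<lambda>b. bcls b = 100) B - count_bins (\<lambda>b. bcls b = 100 \<and> bsmall b) B \<le> 1"
  proof -
    have "beta 100 * (count_bins (\<lambda>b. bcls b = 100) B - 1) \<le> count_bins (\<lambda>b. bcls b = 100 \<and> bsmall b) B"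
      using inv unfolding state_inv_def class_balance_def by auto
    then show ?thesis using beta_tiny by simp
  qed
  moreover have "{2..100::nat} = insert 100 {2..99}" by auto
  ultimately show ?thesis by (simp add: sum_subtractf)
qed

lemma class1_bound_if_no_ready:
  assumes inv: "state_inv I B" and no_ready: "\<not> (\<exists>b\<in>set B. ready b)"
  shows "class1_bound I B"
proof -
  have valid: "valid_input I" and bins: "\<forall>b\<in>set B. bin_inv b" using inv unfolding state_inv_def by auto
  have "n_items 1 I = count_bins bused B + class_items 1 B"
    and "count_bins (\<lambda>b. bcls b = 1 \<and> length (bitems b) = 1) B \<le> 1"
    and "tiny_credit B \<le> tiny_volume I"
    using inv unfolding state_inv_def by auto
  then have "count_bins (\<lambda>b. bcls b = 1) B + 100/99 * tiny_credit B
    \<le> (\<Sum>x\<leftarrow>I. weight_early x) - (\<Sum>x\<leftarrow>I. weight_late x) + 100/99 * tiny_volume I + 150"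
    using class1_bins_le[OF bins] used_bins_lower[OF inv no_ready] tiny_credit_le[of B]
      sum_weight_early_minus_late[OF valid] by linarith
  then show ?thesis unfolding class1_bound_def by (intro exI[of _ "length I"]) simp
qed

lemma class1_bound_snoc:
  assumes "class1_bound I B"
    and "count_bins (\<lambda>b. bcls b = 1) B' \<le> count_bins (\<lambda>b. bcls b = 1) B"
    and "tiny_volume I - tiny_credit B \<le> tiny_volume (I @ [x]) - tiny_credit B'"
  shows "class1_bound (I @ [x]) B'"
proof -
  obtain t where t: "t \<le> length I"
    and bound: "count_bins (\<lambda>b. bcls b = 1) B + 100/99 * tiny_credit B
      \<le> (\<Sum>x\<leftarrow>take t I. weight_early x) - (\<Sum>x\<leftarrow>take t I. weight_late x) + 100/99 * tiny_volume I + 150"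
    using assms(1) unfolding class1_bound_def by blast
  have "take t (I @ [x]) = take t I" using t by simp
  moreover have "count_bins (\<lambda>b. bcls b = 1) B' + 100/99 * tiny_credit B'
    \<le> (\<Sum>x\<leftarrow>take t I. weight_early x) - (\<Sum>x\<leftarrow>take t I. weight_late x)
      + 100/99 * tiny_volume (I @ [x]) + 150"
    using bound assms(2,3) by linarith
  ultimately show ?thesis unfolding class1_bound_def using t by (intro exI[of _ t]) auto
qed

lemma class1_ready_step:
  assumes inv: "state_inv I B" and valid: "valid_input (I @ [x])" and x: "item_class x = 1"
    and j: "j < length B" "ready (B ! j)"
  defines "B' \<equiv> B[j := (add_item x (B ! j))\<lparr>bused := True\<rparr>]"
  shows "state_inv (I @ [x]) B'"
    and "count_bins (\<lambda>b. bcls b = 1) B' = count_bins (\<lambda>b. bcls b = 1) B"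
    and "tiny_credit B' = tiny_credit B"
proof -
  define b where "b = B ! j"
  define b' where "b' = (add_item x b)\<lparr>bused := True\<rparr>"
  have b: "bin_inv b" "2 \<le> bcls b" "bsmall b" "\<not> bactive b" "\<not> bused b"
    using inv j unfolding state_inv_def b_def ready_def by auto
  have "0 < x" "x < 1" "1/2 \<le> x" using valid x item_class_1_ge_half by (auto simp: valid_input_def)
  then have b': "bin_inv b'" "tiny_load b' = tiny_load b"
    using b unfolding bin_inv_def planned_size_def tiny_load_def add_item_def b'_def by auto
  have sums: "(\<Sum>c\<leftarrow>B'. f c) = (\<Sum>c\<leftarrow>B. f c) - f b + f b'" for f :: "bin \<Rightarrow> real"
    unfolding B'_def b_def b'_def using j(1) by (rule sum_list_map_update)
  have "set B' \<subseteq> insert b' (set B)"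
    unfolding B'_def b'_def b_def by (rule set_update_subset_insert)
  then show "state_inv (I @ [x]) B'"
    using inv b b' valid x unfolding state_inv_def class_balance_def count_bins_def class_items_def tiny_credit_def sums
    by (auto simp: b'_def add_item_def)
  show "count_bins (\<lambda>b. bcls b = 1) B' = count_bins (\<lambda>b. bcls b = 1) B"
    unfolding count_bins_def sums by (simp add: b'_def add_item_def)
  show "tiny_credit B' = tiny_credit B"
    unfolding tiny_credit_def sums using b' by (simp add: b'_def add_item_def)
qed

lemma class1_pair_step:
  assumes inv: "state_inv I B" and valid: "valid_input (I @ [x])" and x: "item_class x = 1"
    and no_ready: "\<not> (\<exists>b\<in>set B. ready b)"
    and j: "j < length B" "bcls (B ! j) = 1" "length (bitems (B ! j)) = 1"
  defines "B' \<equiv> B[j := add_item x (B ! j)]"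
  shows "state_inv (I @ [x]) B'" and "\<not> (\<exists>b\<in>set B'. ready b)"
proof -
  define b where "b = B ! j"
  define b' where "b' = add_item x b"
  have b: "bin_inv b" "bcls b = 1" "length (bitems b) = 1" "\<not> bsmall b" "\<not> bactive b" "\<not> bused b"
    using inv j unfolding state_inv_def b_def by (auto simp: bin_inv_def)
  have "0 < x" "x < 1" using valid by (auto simp: valid_input_def)
  then have b': "bin_inv b'" using b unfolding bin_inv_def b'_def add_item_def by auto
  have sums: "(\<Sum>c\<leftarrow>B'. f c) = (\<Sum>c\<leftarrow>B. f c) - f b + f b'" for f :: "bin \<Rightarrow> real"
    unfolding B'_def b_def b'_def using j(1) by (rule sum_list_map_update)
  have set_B': "set B' \<subseteq> insert b' (set B)"
    unfolding B'_def b'_def b_def by (rule set_update_subset_insert)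
  then show "state_inv (I @ [x]) B'"
    using inv b b' valid x unfolding state_inv_def class_balance_def count_bins_def class_items_def tiny_credit_def sums
    by (auto simp: b'_def add_item_def)
  show "\<not> (\<exists>c\<in>set B'. ready c)"
    using set_B' no_ready b unfolding b'_def add_item_def ready_def by auto
qed

lemma class1_new_step:
  assumes inv: "state_inv I B" and valid: "valid_input (I @ [x])" and x: "item_class x = 1"
    and no_ready: "\<not> (\<exists>b\<in>set B. ready b)"
    and no_single: "\<not> (\<exists>b\<in>set B. bcls b = 1 \<and> length (bitems b) = 1)"
  defines "B' \<equiv> B @ [\<lparr>bcls = 1, bsmall = False, bactive = False, bused = False, bitems = [x]\<rparr>]"
  shows "state_inv (I @ [x]) B'" and "\<not> (\<exists>b\<in>set B'. ready b)"
proof -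
  have "0 < x" "x < 1" using valid by (auto simp: valid_input_def)
  moreover have "count_bins (\<lambda>b. bcls b = 1 \<and> length (bitems b) = 1) B = 0"
    using no_single by (intro count_bins_eq_0) auto
  ultimately show "state_inv (I @ [x]) B'"
    using inv valid x unfolding state_inv_def class_balance_def B'_def
    by (auto simp: bin_inv_def count_bins_def class_items_def tiny_credit_def)
  show "\<not> (\<exists>c\<in>set B'. ready c)"
    using no_ready unfolding B'_def ready_def by auto
qed

lemma classi_active_step:
  assumes inv: "state_inv I B" and valid: "valid_input (I @ [x])" and x: "item_class x = i" "2 \<le> i"
    and j: "j < length B" "bcls (B ! j) = i" "bactive (B ! j)"
  defines "B' \<equiv> B[j := close_bin (add_item x (B ! j))]"
  shows "state_inv (I @ [x]) B'"
    and "count_bins (\<lambda>b. bcls b = 1) B' = count_bins (\<lambda>b. bcls b = 1) B"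
    and "tiny_volume I - tiny_credit B \<le> tiny_volume (I @ [x]) - tiny_credit B'"
proof -
  define b where "b = B ! j"
  define b' where "b' = close_bin (add_item x b)"
  have b: "bin_inv b" "bcls b = i" "bactive b" "\<not> bused b"
    using inv j unfolding state_inv_def b_def by (auto simp: bin_inv_def)
  have x01: "0 < x" "x < 1" using valid by (auto simp: valid_input_def)
  then have "i \<le> 100" using x item_class_bounds(2) by blast
  have b'_fields: "bcls b' = i" "bsmall b' = bsmall b" "bused b' = bused b" "bitems b' = bitems b @ [x]"
    "tiny_load b' = tiny_load b + (if x < 1/100 then x else 0)"
    using b unfolding b'_def close_bin_def by (simp_all add: add_item_def tiny_load_def)
  have "bin_inv b'"
  proof (cases "i \<le> 99")
    case True
    have "bactive b' \<longleftrightarrow> length (bitems b) + 1 \<noteq> planned_size b"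
      using b True unfolding b'_def close_bin_def full_def planned_size_def add_item_def by (simp add: M_def)
    then show ?thesis using b x01 True b'_fields unfolding bin_inv_def planned_size_def by auto
  next
    case False
    then have "i = 100" "x < 1/100" using \<open>i \<le> 100\<close> x item_class_bounds(3)[OF x01] by auto
    moreover have "\<forall>y\<in>set (bitems b). y < 1/100" using b \<open>i = 100\<close> unfolding bin_inv_def by auto
    then have "tiny_load b = sum_list (bitems b)" unfolding tiny_load_def by simp
    moreover have "\<not> bactive b' \<Longrightarrow> sum_list (bitems b) + x > 99/100"
      using b \<open>i = 100\<close> unfolding b'_def close_bin_def full_def add_item_def
      by (auto simp: M_def split: if_splits)
    ultimately show ?thesis using b x01 b'_fields unfolding bin_inv_def by auto
  qed
  have tiny: "(if bcls b' = 100 then min (tiny_load b') (99/100) else 0)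
    \<le> (if bcls b = 100 then min (tiny_load b) (99/100) else 0) + (if item_class x = 100 then x else 0)"
    using b'_fields b x x01 item_class_bounds(3)[OF x01] by auto
  have sums: "(\<Sum>c\<leftarrow>B'. f c) = (\<Sum>c\<leftarrow>B. f c) - f b + f b'" for f :: "bin \<Rightarrow> real"
    unfolding B'_def b_def b'_def using j(1) by (rule sum_list_map_update)
  have "set B' \<subseteq> insert b' (set B)"
    unfolding B'_def b'_def b_def by (rule set_update_subset_insert)
  moreover have "count_bins (\<lambda>c. bcls c = i \<and> bactive c) B \<le> 1"
    using inv x(2) \<open>i \<le> 100\<close> unfolding state_inv_def class_balance_def by auto
  ultimately show "state_inv (I @ [x]) B'"
    using inv b \<open>bin_inv b'\<close> b'_fields valid x tiny
    unfolding state_inv_def class_balance_def count_bins_def class_items_def tiny_credit_def sums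
    by (auto simp: of_bool_def)
  show "count_bins (\<lambda>b. bcls b = 1) B' = count_bins (\<lambda>b. bcls b = 1) B"
    unfolding count_bins_def sums using b'_fields b by simp
  show "tiny_volume I - tiny_credit B \<le> tiny_volume (I @ [x]) - tiny_credit B'"
    unfolding tiny_credit_def sums using tiny by simp
qed

lemma class_balance_snoc:
  assumes "class_balance k B" "bcls b \<noteq> k"
  shows "class_balance k (B @ [b])"
  using assms unfolding class_balance_def by (simp add: count_bins_snoc)

lemma class_balance_snoc_new:
  assumes balance: "class_balance i B" and beta: "0 \<le> beta i" "beta i \<le> 1"
    and no_active: "count_bins (\<lambda>c. bcls c = i \<and> bactive c) B = 0"
    and b: "bcls b = i"
      "bsmall b \<longleftrightarrow> count_bins (\<lambda>c. bcls c = i \<and> bsmall c) B \<le> beta i * count_bins (\<lambda>c. bcls c = i) B"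
  shows "class_balance i (B @ [b])"
proof -
  define N where "N = count_bins (\<lambda>c. bcls c = i) B"
  define S where "S = count_bins (\<lambda>c. bcls c = i \<and> bsmall c) B"
  have "beta i * (N - 1) \<le> S" "S \<le> beta i * N + 1"
    using balance unfolding class_balance_def N_def S_def by auto
  then have "beta i * (N + 1 - 1) \<le> S + of_bool (bsmall b)" "S + of_bool (bsmall b) \<le> beta i * (N + 1) + 1"
    using beta b(2)[folded N_def S_def] by (auto simp: algebra_simps)
  then show ?thesis
    using no_active b(1) unfolding class_balance_def N_def S_def by (simp add: count_bins_snoc of_bool_def)
qed

lemma classi_new_step:
  assumes inv: "state_inv I B" and valid: "valid_input (I @ [x])" and x: "item_class x = i" "2 \<le> i"
    and no_active: "\<not> (\<exists>b\<in>set B. bcls b = i \<and> bactive b)"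
  defines "small \<equiv> real (length (filter (\<lambda>b. bcls b = i \<and> bsmall b) B))
                     \<le> beta i * real (length (filter (\<lambda>b. bcls b = i) B))"
  defines "B' \<equiv> B @ [close_bin \<lparr>bcls = i, bsmall = small, bactive = True, bused = False, bitems = [x]\<rparr>]"
  shows "state_inv (I @ [x]) B'"
    and "count_bins (\<lambda>b. bcls b = 1) B' = count_bins (\<lambda>b. bcls b = 1) B"
    and "tiny_volume I - tiny_credit B \<le> tiny_volume (I @ [x]) - tiny_credit B'"
proof -
  define nb where "nb = \<lparr>bcls = i, bsmall = small, bactive = True, bused = False, bitems = [x]\<rparr>"
  have x01: "0 < x" "x < 1" using valid by (auto simp: valid_input_def)
  have "i \<le> 100" using x item_class_bounds(2)[OF x01] by simp
  have tiny_x: "i = 100 \<longleftrightarrow> x < 1/100" using x item_class_bounds(3)[OF x01] by simp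
  have "\<not> full nb" unfolding full_def nb_def using x(2) \<open>i \<le> 100\<close> tiny_x by (auto simp: M_def)
  then have closed: "close_bin nb = nb" unfolding close_bin_def by (simp add: nb_def)
  have "bin_inv nb"
    using x01 x(2) \<open>i \<le> 100\<close> tiny_x unfolding bin_inv_def nb_def planned_size_def tiny_load_def by auto
  have small: "small \<longleftrightarrow> count_bins (\<lambda>c. bcls c = i \<and> bsmall c) B \<le> beta i * count_bins (\<lambda>c. bcls c = i) B"
    unfolding small_def count_bins_eq_length_filter ..
  have "count_bins (\<lambda>b. bcls b = i \<and> bactive b) B = 0"
    using no_active by (intro count_bins_eq_0) auto
  have B': "B' = B @ [nb]" using closed unfolding B'_def nb_def by simp
  have classes: "\<forall>k\<in>{2..100}. class_balance k B'"
  proof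
    fix k :: nat assume k: "k \<in> {2..100}"
    then have "class_balance k B" using inv unfolding state_inv_def by auto
    show "class_balance k B'"
    proof (cases "k = i")
      case True
      have "class_balance i B" using \<open>class_balance k B\<close> True by simp
      moreover have "0 \<le> beta i" "beta i \<le> 1" using beta_range x(2) \<open>i \<le> 100\<close> by auto
      moreover note \<open>count_bins (\<lambda>b. bcls b = i \<and> bactive b) B = 0\<close>
      moreover have "bcls nb = i"
        "bsmall nb \<longleftrightarrow> count_bins (\<lambda>c. bcls c = i \<and> bsmall c) B \<le> beta i * count_bins (\<lambda>c. bcls c = i) B"
        using small by (simp_all add: nb_def)
      ultimately have "class_balance i (B @ [nb])" by (rule class_balance_snoc_new)
      then show ?thesis unfolding B' True .
    next
      case False
      then have "bcls nb \<noteq> k" by (simp add: nb_def)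
      then show ?thesis unfolding B' by (rule class_balance_snoc[OF \<open>class_balance k B\<close>])
    qed
  qed
  show "state_inv (I @ [x]) B'"
    using inv valid x \<open>bin_inv nb\<close> classes tiny_x unfolding state_inv_def B'
    by (auto simp: count_bins_snoc class_items_def tiny_credit_def nb_def tiny_load_def)
  show "count_bins (\<lambda>b. bcls b = 1) B' = count_bins (\<lambda>b. bcls b = 1) B"
    using x unfolding B' by (simp add: count_bins_snoc nb_def)
  show "tiny_volume I - tiny_credit B \<le> tiny_volume (I @ [x]) - tiny_credit B'"
    using x tiny_x unfolding B' by (simp add: tiny_credit_def nb_def tiny_load_def)
qed

lemma alg_step_invariants:
  assumes step: "alg_step beta B x B'" and inv: "state_inv I B" and bound: "class1_bound I B"
    and valid: "valid_input (I @ [x])"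
  shows "state_inv (I @ [x]) B' \<and> class1_bound (I @ [x]) B'"
  using step
proof cases
  case (class1_ready j)
  then show ?thesis
    using class1_ready_step[OF inv valid, of j] class1_bound_snoc[OF bound, of B' x] by simp
next
  case (class1_pair j)
  then show ?thesis
    using class1_pair_step[OF inv valid, of j] class1_bound_if_no_ready by simp
next
  case class1_new
  then show ?thesis
    using class1_new_step[OF inv valid] class1_bound_if_no_ready by simp
next
  case (classi_active i j)
  then show ?thesis
    using classi_active_step[OF inv valid, of i j] class1_bound_snoc[OF bound, of B' x] by simp
next
  case (classi_new i)
  then show ?thesis
    using classi_new_step[OF inv valid, of i] class1_bound_snoc[OF bound, of B' x] by simp
qed

lemma alg_run_invariants:
  assumes "alg_run beta I B" "valid_input I"
  shows "state_inv I B \<and> class1_bound I B"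
  using assms
proof (induction rule: alg_run.induct)
  case run_nil
  show ?case
    using beta_range by (auto simp: state_inv_def class_balance_def class1_bound_def count_bins_def class_items_def
      tiny_credit_def n_items_def tiny_volume_def valid_input_def)
next
  case (run_snoc I B x B')
  then show ?case using alg_step_invariants by (simp add: valid_input_def)
qed

theorem alg_cost_le_weight:
  assumes run: "alg_run beta I B" and valid: "valid_input I"
  shows "\<exists>t \<le> length I. real (length B)
    \<le> (\<Sum>x\<leftarrow>take t I. weight_early x) + (\<Sum>x\<leftarrow>drop t I. weight_late x) + 400"
proof -
  have inv: "state_inv I B" and "class1_bound I B" using alg_run_invariants[OF assms] by auto
  then obtain t where t: "t \<le> length I"
    and class1: "count_bins (\<lambda>b. bcls b = 1) B + 100/99 * tiny_credit B
      \<le> (\<Sum>x\<leftarrow>take t I. weight_early x) - (\<Sum>x\<leftarrow>take t I. weight_late x) + 100/99 * tiny_volume I + 150"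
    unfolding class1_bound_def by blast
  have bins: "\<forall>b\<in>set B. bin_inv b" using inv unfolding state_inv_def by simp
  have "real (length B) = count_bins (\<lambda>_. True) B" by (simp add: count_bins_def sum_list_triv)
  also have "\<dots> = (\<Sum>i\<in>{1..100}. count_bins (\<lambda>b. bcls b = i) B)"
    using bins by (subst count_bins_by_class[where A = "{1..100}"]) (auto simp: bin_inv_def)
  also have "{1..100::nat} = insert 1 (insert 100 {2..99})" by auto
  finally have len: "real (length B) = count_bins (\<lambda>b. bcls b = 1) B + count_bins (\<lambda>b. bcls b = 100) B
    + (\<Sum>i\<in>{2..99}. count_bins (\<lambda>b. bcls b = i) B)" by simp
  have "(\<Sum>i\<in>{2..99}. count_bins (\<lambda>b. bcls b = i) B) \<le> (\<Sum>i\<in>{2..99}. class_weight_late i * n_items i I + 2)"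
    using class_bins_upper[OF inv] by (intro sum_mono) auto
  then have mid: "(\<Sum>i\<in>{2..99}. count_bins (\<lambda>b. bcls b = i) B)
    \<le> (\<Sum>i\<in>{2..99}. class_weight_late i * n_items i I) + 196" by (simp add: sum.distrib)
  have "count_bins (\<lambda>b. bcls b = 100 \<and> bactive b) B \<le> 1" using inv unfolding state_inv_def class_balance_def by simp
  then have tiny: "count_bins (\<lambda>b. bcls b = 100) B \<le> 100/99 * tiny_credit B + 1"
    using tiny_credit_ge[OF bins] by simp
  have "(\<Sum>x\<leftarrow>I. weight_late x) = (\<Sum>x\<leftarrow>take t I. weight_late x) + (\<Sum>x\<leftarrow>drop t I. weight_late x)"
    by (metis append_take_drop_id map_append sum_list_append)
  then have "real (length B) \<le> (\<Sum>x\<leftarrow>take t I. weight_early x) + (\<Sum>x\<leftarrow>drop t I. weight_late x) + 400"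
    using len mid tiny class1 sum_weight_late[OF valid] by linarith
  then show ?thesis using t by blast
qed

end

section \<open>The parameters of the theorem\<close>

lemma beta_paper_admissible: "admissible_beta beta_paper"
proof
  fix i :: nat assume i: "2 \<le> i" "i \<le> 99"
  show "0 \<le> beta_paper i \<and> beta_paper i \<le> 1"
  proof (cases "i \<le> 11")
    case True
    then have "2 * theta * real (i + 1) \<le> 2 * theta * 12" by (simp add: theta_def)
    then show ?thesis using i True by (auto simp: beta_paper_def theta_def Delta_def)
  qed (use i in \<open>simp add: beta_paper_def\<close>)
qed (simp add: beta_paper_def)

interpretation paper: admissible_beta beta_paper
  by (rule beta_paper_admissible)

lemma class_weights_paper_large:
  assumes "12 \<le> i" "i \<le> 99"
  shows "paper.class_weight_early i = 1 / (2 * real i)" "paper.class_weight_late i = 1 / real i"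
  using assms by (simp_all add: paper.class_weight_early_def paper.class_weight_late_def beta_paper_def)

lemma upto_11: "{1..11::nat} = {1,2,3,4,5,6,7,8,9,10,11}"
  by (auto simp: numeral_eq_Suc le_Suc_eq)

lemma paper_item_weights:
  assumes "0 < x" "x < 1"
  shows "paper.weight_early x \<le> 1/2" "paper.weight_late x \<le> 1 - 2 * Delta"
    and "paper.weight_early x \<le> 3 * (1 - 2 * Delta) * x" "paper.weight_late x \<le> 3 * (1 - 2 * Delta) * x"
proof -
  define i where "i = item_class x"
  have "paper.weight_early x \<le> 1/2 \<and> paper.weight_late x \<le> 1 - 2 * Delta
    \<and> paper.weight_early x \<le> 3 * (1 - 2 * Delta) * x \<and> paper.weight_late x \<le> 3 * (1 - 2 * Delta) * x"
  proof (cases "i = 1 \<or> i = 100")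
    case True
    then have "i = 1 \<Longrightarrow> 1/2 \<le> x" "i = 100 \<Longrightarrow> x < 1/100"
      using item_class_1_ge_half item_class_bounds(3) assms unfolding i_def by auto
    then show ?thesis using True assms unfolding paper.weight_early_def paper.weight_late_def
      paper.class_weight_early_def paper.class_weight_late_def i_def[symmetric] by (auto simp: Delta_def)
  next
    case False
    then have i: "2 \<le> i" "i \<le> 99"
      using item_class_bounds(1,2)[OF assms] unfolding i_def by auto
    have lo: "1 / real (i + 1) \<le> x" using item_class_bounds(4)[OF assms] i unfolding i_def by simp
    have w: "paper.weight_early x = paper.class_weight_early i" "paper.weight_late x = paper.class_weight_late i"
      using i unfolding paper.weight_early_def paper.weight_late_def i_def by auto
    have "paper.class_weight_late i \<le> 3 * (1 - 2 * Delta) / real (i + 1)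
      \<and> paper.class_weight_late i \<le> 1 - 2 * Delta"
    proof (cases "i \<le> 11")
      case True
      then have "i \<in> {1..11}" using i by simp
      then show ?thesis unfolding upto_11
        by (auto simp: paper.class_weight_late_def beta_paper_def theta_def Delta_def)
    next
      case False
      then have "paper.class_weight_late i = 1 / real i" using i class_weights_paper_large by simp
      moreover have "1 / real i \<le> 13/12 / real (i + 1)" "1 / real i \<le> 1 - 2 * Delta"
        using False by (simp_all add: Delta_def field_simps)
      moreover have "13/12 / real (i + 1) \<le> 3 * (1 - 2 * Delta) / real (i + 1)"
        by (intro divide_right_mono) (auto simp: Delta_def)
      ultimately show ?thesis by linarith
    qed
    moreover have "3 * (1 - 2 * Delta) / real (i + 1) \<le> 3 * (1 - 2 * Delta) * x"
      using mult_left_mono[OF lo, of "3 * (1 - 2 * Delta)"] by (simp add: Delta_def)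
    moreover have "paper.class_weight_early i \<le> paper.class_weight_late i"
      using paper.class_weight_early_le_late i by simp
    ultimately show ?thesis using w by (auto simp: Delta_def)
  qed
  then show "paper.weight_early x \<le> 1/2" "paper.weight_late x \<le> 1 - 2 * Delta"
    "paper.weight_early x \<le> 3 * (1 - 2 * Delta) * x" "paper.weight_late x \<le> 3 * (1 - 2 * Delta) * x"
    by auto
qed

section \<open>Weight of one bin of an offline packing\<close>

text \<open>Decimal upper bounds for \<open>paper.class_weight_early\<close> on the classes 1 to 11; with them
  the enumeration of \<open>knapsack_table\<close> stays cheap.\<close>
definition early_weight_table :: "nat \<Rightarrow> real" where
  "early_weight_table i = (if i = 1 then 0.5 else if i = 2 then 0.319418991003
     else if i = 3 then 0.2291285114 else if i = 4 then 0.17495421368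
     else if i = 5 then 0.1388380152 else if i = 6 then 0.113040730571
     else if i = 7 then 0.0936927671 else if i = 8 then 0.078644351067
     else if i = 9 then 0.06660561824 else if i = 10 then 0.056755745927
     else if i = 11 then 0.048547519 else 0)"

definition small_items_weight_bound :: "real \<Rightarrow> real" where
  "small_items_weight_bound r = (if r \<le> 1/42 then 43/84 * r else 13/24 * r)"

lemma class_weight_early_le_table:
  assumes "1 \<le> i" "i \<le> 11"
  shows "paper.class_weight_early i \<le> early_weight_table i"
proof -
  have "i \<in> {1..11}" using assms by simp
  then show ?thesis unfolding upto_11
    by (auto simp: paper.class_weight_early_def paper.class_weight_late_def
      early_weight_table_def beta_paper_def theta_def Delta_def)
qed

lemma class_weight_early_le_linear:
  assumes "1 \<le> i" "i \<le> 11"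
  shows "paper.class_weight_early i \<le> (1 / real (i + 1) - theta) / (1 - 2 * theta)"
proof -
  have "i \<in> {1..11}" using assms by simp
  then show ?thesis unfolding upto_11
    by (auto simp: paper.class_weight_early_def paper.class_weight_late_def
      beta_paper_def theta_def Delta_def)
qed

lemma knapsack_table_sorted:
  assumes "sorted cs" "set cs \<subseteq> {1..11}" "length cs \<le> 3" "(\<Sum>c\<leftarrow>cs. 1 / real (c + 1)) < 1"
  shows "(\<Sum>c\<leftarrow>cs. early_weight_table c)
    + small_items_weight_bound (1 - (\<Sum>c\<leftarrow>cs. 1 / real (c + 1))) \<le> 1.44465 - 1/2"
proof -
  have one: "\<forall>a\<in>{1..11::nat}.
      early_weight_table a + small_items_weight_bound (1 - 1 / real (a + 1)) \<le> 1.44465 - 1/2"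
    unfolding upto_11 by (simp add: early_weight_table_def small_items_weight_bound_def)
  have two: "\<forall>a\<in>{1..11::nat}. \<forall>b\<in>{1..11::nat}. a \<le> b \<longrightarrow>
      1 / real (a + 1) + 1 / real (b + 1) < 1 \<longrightarrow>
      early_weight_table a + early_weight_table b
      + small_items_weight_bound (1 - (1 / real (a + 1) + 1 / real (b + 1))) \<le> 1.44465 - 1/2"
    unfolding upto_11 by (simp add: early_weight_table_def small_items_weight_bound_def)
  have three: "\<forall>a\<in>{1..11::nat}. \<forall>b\<in>{1..11::nat}. \<forall>c\<in>{1..11::nat}. a \<le> b \<longrightarrow> b \<le> c \<longrightarrow>
      1 / real (a + 1) + 1 / real (b + 1) + 1 / real (c + 1) < 1 \<longrightarrow>
      early_weight_table a + early_weight_table b + early_weight_table c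
      + small_items_weight_bound (1 - (1 / real (a + 1) + 1 / real (b + 1) + 1 / real (c + 1)))
      \<le> 1.44465 - 1/2"
    unfolding upto_11 by (simp add: early_weight_table_def small_items_weight_bound_def)
  consider "cs = []" | a where "cs = [a]" | a b where "cs = [a, b]" | a b c where "cs = [a, b, c]"
  proof -
    consider "length cs = 0" | "length cs = Suc 0" | "length cs = Suc (Suc 0)"
      | "length cs = Suc (Suc (Suc 0))"
      using assms(3) by linarith
    then show ?thesis using that by cases (auto simp: length_Suc_conv)
  qed
  then show ?thesis
  proof cases
    case 1
    then show ?thesis by (simp add: small_items_weight_bound_def)
  next
    case (2 a)
    then have "a \<in> {1..11}" using assms(2) by simp
    then show ?thesis using one 2 by simp
  next
    case (3 a b)
    then have "a \<in> {1..11}" "b \<in> {1..11}" "a \<le> b" using assms(1,2) by simp_all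
    then show ?thesis using two[rule_format, of a b] assms(4) 3 by simp
  next
    case (4 a b c)
    then have "a \<in> {1..11}" "b \<in> {1..11}" "c \<in> {1..11}" "a \<le> b" "b \<le> c"
      using assms(1,2) by simp_all
    then show ?thesis using three[rule_format, of a b c] assms(4) 4 by (simp add: add.assoc)
  qed
qed

lemma knapsack_table:
  assumes "set cs \<subseteq> {1..11}" "length cs \<le> 3" "(\<Sum>c\<leftarrow>cs. 1 / real (c + 1)) < 1"
  shows "(\<Sum>c\<leftarrow>cs. early_weight_table c)
    + small_items_weight_bound (1 - (\<Sum>c\<leftarrow>cs. 1 / real (c + 1))) \<le> 1.44465 - 1/2"
proof -
  have sort_inv: "(\<Sum>c\<leftarrow>sort cs. f c) = (\<Sum>c\<leftarrow>cs. f c)" for f :: "nat \<Rightarrow> real"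
    by (simp only: sum_mset_sum_list[symmetric] mset_map mset_sort)
  show ?thesis using knapsack_table_sorted[of "sort cs"] assms by (simp add: sort_inv)
qed

lemma weight_early_small_item:
  assumes "0 < x" "x < 1/12"
  shows "0 \<le> paper.weight_early x" "paper.weight_early x \<le> 13/24 * x"
    and "x < 1/42 \<Longrightarrow> paper.weight_early x \<le> 43/84 * x"
proof -
  have x1: "x < 1" using assms by simp
  have "0 \<le> paper.weight_early x \<and> paper.weight_early x \<le> 13/24 * x
    \<and> (x < 1/42 \<longrightarrow> paper.weight_early x \<le> 43/84 * x)"
  proof (cases "item_class x = 100")
    case True
    then show ?thesis using assms by (simp add: paper.weight_early_def)
  next
    case False
    define i where "i = item_class x"
    have "i \<le> 99" using False item_class_bounds(2)[OF assms(1) x1] unfolding i_def by simp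
    then have lo: "1 / real (i + 1) \<le> x" using item_class_bounds(4)[OF assms(1) x1] unfolding i_def by simp
    then have "1 / real (i + 1) < 1/12" using assms by linarith
    then have "12 \<le> i" by (simp add: field_simps)
    then have w: "paper.weight_early x = 1 / (2 * real i)"
      using False \<open>i \<le> 99\<close> class_weights_paper_large unfolding paper.weight_early_def i_def by simp
    have "1 / (2 * real i) \<le> 13/24 * (1 / real (i + 1))" using \<open>12 \<le> i\<close> by (simp add: field_simps)
    also have "\<dots> \<le> 13/24 * x" using lo by (intro mult_left_mono) auto
    finally have "paper.weight_early x \<le> 13/24 * x" using w by simp
    moreover have "paper.weight_early x \<le> 43/84 * x" if "x < 1/42"
    proof -
      have "1 / real (i + 1) < 1/42" using lo that by linarith
      then have "42 < real i + 1" by (simp add: field_simps)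
      then have "1 / (2 * real i) \<le> 43/84 * (1 / real (i + 1))" by (simp add: field_simps)
      also have "\<dots> \<le> 43/84 * x" using lo by (intro mult_left_mono) auto
      finally show ?thesis using w by simp
    qed
    ultimately show ?thesis using w by simp
  qed
  then show "0 \<le> paper.weight_early x" "paper.weight_early x \<le> 13/24 * x"
    "x < 1/42 \<Longrightarrow> paper.weight_early x \<le> 43/84 * x" by auto
qed

lemma weight_early_large_item:
  assumes "1/12 \<le> x" "x < 1"
  shows "1 \<le> item_class x" "item_class x \<le> 11" "1 / real (item_class x + 1) \<le> x"
    and "paper.weight_early x = paper.class_weight_early (item_class x)"
proof -
  have x0: "0 < x" using assms by simp
  have "item_class x \<noteq> 100" using item_class_bounds(3)[OF x0 assms(2)] assms by simp
  then have "item_class x \<le> 99" using item_class_bounds(2)[OF x0 assms(2)] by simp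
  then have bounds: "1 / real (item_class x + 1) \<le> x" "x < 1 / real (item_class x)"
    using item_class_bounds(4)[OF x0 assms(2)] by auto
  then have "1/12 < 1 / real (item_class x)" using assms(1) by linarith
  then have "real (item_class x) < 12" using item_class_bounds(1)[OF x0 assms(2)]
    by (simp add: field_simps)
  then show "item_class x \<le> 11" by simp
  show "1 \<le> item_class x" "1 / real (item_class x + 1) \<le> x"
    using item_class_bounds(1)[OF x0 assms(2)] bounds by simp_all
  show "paper.weight_early x = paper.class_weight_early (item_class x)"
    using \<open>item_class x \<noteq> 100\<close> unfolding paper.weight_early_def by simp
qed

lemma small_items_weight:
  assumes "\<forall>x\<in>set S. 0 < x \<and> x < 1/12"
  shows "(\<Sum>x\<leftarrow>S. paper.weight_early x) \<le> 13/24 * sum_list S"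
    and "sum_list S < r \<Longrightarrow> (\<Sum>x\<leftarrow>S. paper.weight_early x) \<le> small_items_weight_bound r"
proof -
  have "(\<Sum>x\<leftarrow>S. paper.weight_early x) \<le> (\<Sum>x\<leftarrow>S. 13/24 * x)"
    using assms weight_early_small_item(2) by (intro sum_list_mono) auto
  also have "\<dots> = 13/24 * sum_list S" using sum_list_const_mult[of "13/24" "\<lambda>x. x" S] by simp
  finally show linear: "(\<Sum>x\<leftarrow>S. paper.weight_early x) \<le> 13/24 * sum_list S" .
  assume r: "sum_list S < r"
  show "(\<Sum>x\<leftarrow>S. paper.weight_early x) \<le> small_items_weight_bound r"
  proof (cases "r \<le> 1/42")
    case True
    have "(\<Sum>x\<leftarrow>S. paper.weight_early x) \<le> (\<Sum>x\<leftarrow>S. 43/84 * x)"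
    proof (rule sum_list_mono)
      fix x assume x: "x \<in> set S"
      then have "x \<le> sum_list S" using assms by (intro member_le_sum_list) auto
      then have "x < 1/42" using r True by linarith
      then show "paper.weight_early x \<le> 43/84 * x"
        using x assms weight_early_small_item(3) by simp
    qed
    also have "\<dots> = 43/84 * sum_list S" using sum_list_const_mult[of "43/84" "\<lambda>x. x" S] by simp
    finally show ?thesis using r True by (simp add: small_items_weight_bound_def)
  next
    case False
    then show ?thesis using linear r by (simp add: small_items_weight_bound_def)
  qed
qed

lemma large_items_weight:
  assumes "\<forall>x\<in>set L. 1/12 \<le> x \<and> x < 1"
  shows "(\<Sum>x\<leftarrow>L. paper.weight_early x) \<le> (sum_list L - real (length L) * theta) / (1 - 2 * theta)"
proof -
  have "(\<Sum>x\<leftarrow>L. paper.weight_early x) \<le> (\<Sum>x\<leftarrow>L. (x - theta) / (1 - 2 * theta))"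
  proof (rule sum_list_mono)
    fix x assume "x \<in> set L"
    then have x: "1/12 \<le> x" "x < 1" using assms by auto
    have "paper.weight_early x \<le> (1 / real (item_class x + 1) - theta) / (1 - 2 * theta)"
      using weight_early_large_item[OF x] class_weight_early_le_linear by simp
    also have "\<dots> \<le> (x - theta) / (1 - 2 * theta)"
      using weight_early_large_item(3)[OF x] by (intro divide_right_mono) (auto simp: theta_def)
    finally show "paper.weight_early x \<le> (x - theta) / (1 - 2 * theta)" .
  qed
  also have "\<dots> = (sum_list L - real (length L) * theta) / (1 - 2 * theta)"
    by (induction L) (auto simp: diff_divide_distrib add_divide_distrib algebra_simps)
  finally show ?thesis .
qed

lemma many_large_items_weight:
  assumes L: "\<forall>x\<in>set L. 1/12 \<le> x \<and> x < 1" "4 \<le> length L"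
    and S: "\<forall>x\<in>set S. 0 < x \<and> x < 1/12" and total: "sum_list L + sum_list S < 1"
  shows "(\<Sum>x\<leftarrow>L. paper.weight_early x) + (\<Sum>x\<leftarrow>S. paper.weight_early x) \<le> 1.44465 - 1/2"
proof -
  have "0 \<le> sum_list S" using S by (intro sum_list_nonneg) auto
  have "(\<Sum>x\<leftarrow>L. paper.weight_early x) \<le> (sum_list L - real (length L) * theta) / (1 - 2 * theta)"
    using L(1) by (rule large_items_weight)
  also have "\<dots> \<le> (sum_list L - 4 * theta) / (1 - 2 * theta)"
    using L(2) by (intro divide_right_mono) (auto simp: theta_def)
  finally have "(\<Sum>x\<leftarrow>L. paper.weight_early x) \<le> (sum_list L - 4 * theta) / (1 - 2 * theta)" .
  moreover have "(\<Sum>x\<leftarrow>S. paper.weight_early x) \<le> 13/24 * sum_list S"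
    using S by (rule small_items_weight(1))
  moreover have "(sum_list L - 4 * theta) / (1 - 2 * theta) + 13/24 * sum_list S \<le> 1.44465 - 1/2"
    using \<open>0 \<le> sum_list S\<close> total unfolding theta_def by (simp add: field_simps)
  ultimately show ?thesis by linarith
qed

lemma few_large_items_weight:
  assumes L: "\<forall>x\<in>set L. 1/12 \<le> x \<and> x < 1" "length L \<le> 3"
    and S: "\<forall>x\<in>set S. 0 < x \<and> x < 1/12" and total: "sum_list L + sum_list S < 1"
  shows "(\<Sum>x\<leftarrow>L. paper.weight_early x) + (\<Sum>x\<leftarrow>S. paper.weight_early x) \<le> 1.44465 - 1/2"
proof -
  define cs where "cs = map item_class L"
  have cs: "set cs \<subseteq> {1..11}" "length cs \<le> 3"
    using L weight_early_large_item(1,2) unfolding cs_def by auto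
  have "0 \<le> sum_list S" using S by (intro sum_list_nonneg) auto
  have "(\<Sum>c\<leftarrow>cs. 1 / real (c + 1)) = (\<Sum>x\<leftarrow>L. 1 / real (item_class x + 1))"
    unfolding cs_def by (simp add: comp_def)
  also have "\<dots> \<le> (\<Sum>x\<leftarrow>L. x)"
    using L weight_early_large_item(3) by (intro sum_list_mono) auto
  finally have "(\<Sum>c\<leftarrow>cs. 1 / real (c + 1)) \<le> sum_list L" by simp
  then have lt1: "(\<Sum>c\<leftarrow>cs. 1 / real (c + 1)) < 1"
    and "sum_list S < 1 - (\<Sum>c\<leftarrow>cs. 1 / real (c + 1))"
    using total \<open>0 \<le> sum_list S\<close> by linarith+
  then have "(\<Sum>x\<leftarrow>S. paper.weight_early x) \<le> small_items_weight_bound (1 - (\<Sum>c\<leftarrow>cs. 1 / real (c + 1)))"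
    using S by (intro small_items_weight(2))
  moreover have "(\<Sum>x\<leftarrow>L. paper.weight_early x) \<le> (\<Sum>x\<leftarrow>L. early_weight_table (item_class x))"
  proof (rule sum_list_mono)
    fix x assume "x \<in> set L"
    then have x: "1/12 \<le> x" "x < 1" using L by auto
    show "paper.weight_early x \<le> early_weight_table (item_class x)"
      using weight_early_large_item[OF x] class_weight_early_le_table by simp
  qed
  moreover have "(\<Sum>x\<leftarrow>L. early_weight_table (item_class x)) = (\<Sum>c\<leftarrow>cs. early_weight_table c)"
    unfolding cs_def by (simp add: comp_def)
  ultimately show ?thesis using knapsack_table[OF cs lt1] by linarith
qed

theorem weight_early_bin_le:
  assumes items: "\<forall>x\<in>set xs. 0 < x \<and> x < 1" and total: "sum_list xs < 1"
  shows "(\<Sum>x\<leftarrow>xs. paper.weight_early x) \<le> 1.44465 - 1/2"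
proof -
  define L where "L = filter (\<lambda>x. 1/12 \<le> x) xs"
  define S where "S = filter (\<lambda>x. \<not> 1/12 \<le> x) xs"
  have "sum_list xs = sum_list L + sum_list S"
    and split: "(\<Sum>x\<leftarrow>xs. paper.weight_early x) = (\<Sum>x\<leftarrow>L. paper.weight_early x) + (\<Sum>x\<leftarrow>S. paper.weight_early x)"
    unfolding L_def S_def by (induction xs) auto
  then have "sum_list L + sum_list S < 1" using total by simp
  moreover have "\<forall>x\<in>set L. 1/12 \<le> x \<and> x < 1" "\<forall>x\<in>set S. 0 < x \<and> x < 1/12"
    using items unfolding S_def L_def by auto
  ultimately show ?thesis
    unfolding split using many_large_items_weight few_large_items_weight by (cases "4 \<le> length L") auto
qed

lemma sum_take_drop_eq_sum_nth:
  "(\<Sum>x\<leftarrow>take t xs. f x) + (\<Sum>x\<leftarrow>drop t xs. g x)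
    = (\<Sum>j<length xs. if j < t then f (xs ! j) else (g (xs ! j) :: 'a::comm_monoid_add))"
proof (induction xs rule: rev_induct)
  case (snoc x xs)
  have "(\<Sum>j<length xs. if j < t then f ((xs @ [x]) ! j) else g ((xs @ [x]) ! j))
    = (\<Sum>j<length xs. if j < t then f (xs ! j) else g (xs ! j))"
    by (intro sum.cong) (auto simp: nth_append)
  then show ?case using snoc by (cases "length xs < t") (auto simp: add_ac)
qed simp

lemma OPT_attained: "\<exists>f. valid_packing I f \<and> card (f ` {..<length I}) = OPT I"
proof -
  have no_earlier: "{k. k < j \<and> id k = id j} = {}" for j :: nat by auto
  have "valid_packing I id" unfolding valid_packing_def no_earlier by simp
  then have "\<exists>m f. valid_packing I f \<and> card (f ` {..<length I}) = m" by blast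
  then show ?thesis unfolding OPT_def by (rule LeastI_ex)
qed

lemma packing_bin_weight_le:
  assumes valid: "valid_input I" and packing: "valid_packing I f" and l: "l \<in> f ` {..<length I}"
  shows "(\<Sum>j\<in>{j \<in> {..<length I}. f j = l}.
    if j < t then paper.weight_early (I ! j) else paper.weight_late (I ! j)) \<le> 1.44465"
proof -
  define J where "J = {j \<in> {..<length I}. f j = l}"
  define w where "w j = (if j < t then paper.weight_early (I ! j) else paper.weight_late (I ! j))" for j
  define m where "m = Max J"
  have "finite J" "J \<noteq> {}" using l unfolding J_def by auto
  then have m: "m \<in> J" "\<And>j. j \<in> J \<Longrightarrow> j \<le> m" unfolding m_def by simp_all
  then have "m < length I" "f m = l" unfolding J_def by auto
  define J' where "J' = J - {m}"
  have J': "J' = {k. k < m \<and> f k = f m}"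
    using m \<open>m < length I\<close> \<open>f m = l\<close> unfolding J'_def J_def by fastforce
  have items: "0 < I ! j \<and> I ! j < 1" if "j \<in> J'" for j
    using valid that J' \<open>m < length I\<close> unfolding valid_input_def by auto
  have rest: "(\<Sum>j\<in>J'. I ! j) < 1" using packing \<open>m < length I\<close> unfolding valid_packing_def J' by auto
  have split: "(\<Sum>j\<in>J. w j) = w m + (\<Sum>j\<in>J'. w j)"
    unfolding J'_def using \<open>finite J\<close> m(1) by (simp add: sum.remove)
  have last: "0 < I ! m" "I ! m < 1" using valid \<open>m < length I\<close> unfolding valid_input_def by auto
  have "w m + (\<Sum>j\<in>J'. w j) \<le> 1.44465"
  proof (cases "m < t")
    case True
    define xs where "xs = map (\<lambda>j. I ! j) (sorted_list_of_set J')"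
    have "finite J'" using \<open>finite J\<close> unfolding J'_def by simp
    then have "sum_list xs = (\<Sum>j\<in>J'. I ! j)" "(\<Sum>x\<leftarrow>xs. paper.weight_early x) = (\<Sum>j\<in>J'. paper.weight_early (I ! j))"
      "\<forall>x\<in>set xs. 0 < x \<and> x < 1"
      unfolding xs_def using items by (auto simp: sum_list_distinct_conv_sum_set comp_def)
    then have "(\<Sum>j\<in>J'. paper.weight_early (I ! j)) \<le> 1.44465 - 1/2"
      using weight_early_bin_le[of xs] rest by simp
    moreover have "(\<Sum>j\<in>J'. w j) = (\<Sum>j\<in>J'. paper.weight_early (I ! j))"
      using True J' unfolding w_def by (intro sum.cong) auto
    moreover have "w m \<le> 1/2" using True paper_item_weights(1)[OF last] unfolding w_def by simp
    ultimately show ?thesis by simp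
  next
    case False
    have "w m \<le> 1 - 2 * Delta" using False paper_item_weights(2)[OF last] unfolding w_def by simp
    moreover have "(\<Sum>j\<in>J'. w j) \<le> (\<Sum>j\<in>J'. 3 * (1 - 2 * Delta) * I ! j)"
      using items paper_item_weights(3,4) unfolding w_def by (intro sum_mono) auto
    moreover have "(\<Sum>j\<in>J'. 3 * (1 - 2 * Delta) * I ! j) = 3 * (1 - 2 * Delta) * (\<Sum>j\<in>J'. I ! j)"
      by (simp add: sum_distrib_left)
    moreover have "\<dots> \<le> 3 * (1 - 2 * Delta)"
      using rest by (intro mult_left_le) (auto simp: Delta_def)
    ultimately show ?thesis by (simp add: Delta_def)
  qed
  then show ?thesis using split unfolding J_def w_def by simp
qed

theorem weight_le_OPT:
  assumes "valid_input I"
  shows "(\<Sum>x\<leftarrow>take t I. paper.weight_early x) + (\<Sum>x\<leftarrow>drop t I. paper.weight_late x)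
    \<le> 1.44465 * real (OPT I)"
proof -
  obtain f where f: "valid_packing I f" "card (f ` {..<length I}) = OPT I" using OPT_attained by blast
  define w where "w j = (if j < t then paper.weight_early (I ! j) else paper.weight_late (I ! j))" for j
  have "(\<Sum>x\<leftarrow>take t I. paper.weight_early x) + (\<Sum>x\<leftarrow>drop t I. paper.weight_late x) = (\<Sum>j<length I. w j)"
    unfolding w_def by (rule sum_take_drop_eq_sum_nth)
  also have "\<dots> = (\<Sum>l\<in>f ` {..<length I}. \<Sum>j\<in>{j \<in> {..<length I}. f j = l}. w j)"
    by (rule sum.image_gen) simp
  also have "\<dots> \<le> (\<Sum>l\<in>f ` {..<length I}. 1.44465)"
    using packing_bin_weight_le[OF assms f(1)] unfolding w_def by (intro sum_mono) auto
  also have "\<dots> = 1.44465 * real (OPT I)" using f(2) by simp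
  finally show ?thesis .
qed

lemma asymp_ratio_le:
  assumes bound: "\<And>I B. valid_input I \<Longrightarrow> alg_run beta I B \<Longrightarrow> real (length B) \<le> c * real (OPT I) + d"
    and "0 \<le> d"
  shows "asymp_ratio beta \<le> ereal c"
proof -
  define F where "F k = (SUP (I, B) \<in> {(I, B). valid_input I \<and> alg_run beta I B \<and> OPT I \<ge> k}.
    ereal (real (length B) / real (OPT I)))" for k
  define g where "g k = ereal (c + d / real k)" for k :: nat
  have "F k \<le> g k" if "k \<ge> 1" for k
    unfolding F_def
  proof (rule SUP_least)
    fix p assume "p \<in> {(I, B). valid_input I \<and> alg_run beta I B \<and> OPT I \<ge> k}"
    then obtain I B where p: "p = (I, B)" "valid_input I" "alg_run beta I B" "OPT I \<ge> k" by auto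
    have pos: "real k \<le> real (OPT I)" "1 \<le> real k" using p that by auto
    then have "real (length B) / real (OPT I) \<le> c + d / real (OPT I)"
      using bound[OF p(2,3)] by (simp add: field_simps)
    also have "d / real (OPT I) \<le> d / real k" using pos \<open>0 \<le> d\<close> by (intro divide_left_mono) auto
    finally show "(case p of (I, B) \<Rightarrow> ereal (real (length B) / real (OPT I))) \<le> g k"
      unfolding g_def p by simp
  qed
  then have "asymp_ratio beta \<le> limsup g"
    unfolding asymp_ratio_def F_def[symmetric]
    by (intro Limsup_mono) (auto simp: eventually_sequentially intro: exI[of _ 1])
  also have "limsup g = ereal c"
  proof (rule lim_imp_Limsup)
    have "(\<lambda>k. c + d / real k) \<longlonglongrightarrow> c + 0"
      by (intro tendsto_add tendsto_const lim_const_over_n)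
    then show "g \<longlonglongrightarrow> ereal c" unfolding g_def by simp
  qed simp
  finally show ?thesis .
qed

theorem mainTheorem6:
  shows "asymp_ratio beta_paper \<le> ereal 1.44465"
proof (rule asymp_ratio_le)
  fix I B assume valid: "valid_input I" and run: "alg_run beta_paper I B"
  obtain t where "real (length B)
    \<le> (\<Sum>x\<leftarrow>take t I. paper.weight_early x) + (\<Sum>x\<leftarrow>drop t I. paper.weight_late x) + 400"
    using paper.alg_cost_le_weight[OF run valid] by blast
  then show "real (length B) \<le> 1.44465 * real (OPT I) + 400"
    using weight_le_OPT[OF valid, of t] by linarith
qed simp

end
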